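(* Let $\rho^{(2)}_n := 6-4(1+\frac1n)^{3/2}-4(1-\frac1n)^{3/2}+(1+\frac2n)^{3/2}+(1-\frac2n)^{3/2}$ for $n\ge2$. Let $\rho=\{\rho_n\}_{n\ge2}$ be a Rellich weight such that $\rho_n\ge\rho^{(2)}_n$ for all $n\ge2$. Then \[ \sum_{n=2}^{\infty}n^3\left(\rho_n-\rho^{(2)}_n\right)\le 8\sqrt2-3\sqrt3 . \]
   Context: $H_0^2(\mathbb{N}_0):=\{u\in\ell^2(\mathbb{N}_0): u_0=u_1=0\}$. The discrete Dirichlet Laplacian acts by $(-\Delta u)_0=2u_0-u_1$, $(-\Delta u)_n=-u_{n-1}+2u_n-u_{n+1}$ for $n\ge1$. A positive sequence $\{\rho_n\}_{n\ge2}$ is called a Rellich weight if $\sum_{n=1}^\infty|(-\Delta u)_n|^2\ge\sum_{n=2}^\infty\rho_n|u_n|^2$ for all $u\in H_0^2(\mathbb{N}_0)$. *)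

theory Defs
  imports "HOL-Analysis.Analysis"
begin

definition H02 :: "(nat \<Rightarrow> real) set" where
  "H02 = {u. summable (\<lambda>n. (u n)\<^sup>2) \<and> u 0 = 0 \<and> u 1 = 0}"

definition neg_lap :: "(nat \<Rightarrow> real) \<Rightarrow> nat \<Rightarrow> real" where
  "neg_lap u n = (if n = 0 then 2 * u 0 - u 1 else - u (n - 1) + 2 * u n - u (n + 1))"

definition rellich_weight :: "(nat \<Rightarrow> real) \<Rightarrow> bool" where
  "rellich_weight \<rho> \<longleftrightarrow> (\<forall>n\<ge>2. \<rho> n > 0) \<and>
     (\<forall>u\<in>H02. summable (\<lambda>n. \<rho> (n + 2) * (u (n + 2))\<^sup>2) \<and>
        (\<Sum>n. \<rho> (n + 2) * (u (n + 2))\<^sup>2) \<le> (\<Sum>n. (neg_lap u (n + 1))\<^sup>2))"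

definition rho2 :: "nat \<Rightarrow> real" where
  "rho2 n = 6 - 4 * (1 + 1 / real n) powr (3/2) - 4 * (1 - 1 / real n) powr (3/2)
            + (1 + 2 / real n) powr (3/2) + (1 - 2 / real n) powr (3/2)"

end

theory Submission
  imports Defs
begin

text \<open>
With w(n) = n^(3/2) one has \<rho>2 = \<Delta>^2 w / w. For u = w \<psi> with \<psi> finitely supported and
\<psi>(0) = \<psi>(1) = 0, summation by parts gives the ground state representation
  \<Sum> |\<Delta>u|^2 = \<Sum> \<rho>2 u^2 + \<Sum> [4 w(n) w(n+1) (\<psi>(n+1) - \<psi>(n))^2 - w(n) w(n+2) (\<psi>(n+2) - \<psi>(n))^2],
so the Rellich inequality bounds \<Sum> n^3 (\<rho> - \<rho>2) \<psi>^2 by the last (kinetic) sum.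
Take \<psi> = 1 on [2, N], decreasing to 0 at K with decrements proportional to K/(m+1) - 1, whose
total S is at least K (H(K) - H(N) - 1). The kinetic term at n = 1 is exactly
4 w(1) w(2) - w(1) w(3) = 8 \<surd>2 - 3 \<surd>3; the others add up to O(N (K/S)^2 + K/S), which tends
to 0 as K \<rightarrow> \<infinity> because the harmonic numbers H diverge.
\<close>

definition pow32 :: "nat \<Rightarrow> real" where
  "pow32 n = real n * sqrt (real n)"

lemma powr_three_halves: "x \<ge> 0 \<Longrightarrow> x powr (3/2) = x * sqrt x"
  for x :: real
  by (cases "x = 0") (simp_all add: powr_add[of x 1 "1/2", simplified] powr_half_sqrt)

lemma rho2_mult_pow32:
  "rho2 (n+2) * pow32 (n+2) = neg_lap (neg_lap pow32) (n+2)"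
proof -
  define x where "x = real (n+2)"
  let ?p = "\<lambda>t::real. t powr (3/2)"
  have x0: "x > 0" unfolding x_def by simp
  have px: "?p x > 0" using x0 by simp
  have pow32_eq: "pow32 k = ?p (real k)" for k by (simp add: pow32_def powr_three_halves)
  have quot: "?p (1 + c / x) = ?p (x + c) / ?p x" if "x + c \<ge> 0" for c
    using that x0 by (simp add: powr_divide add_divide_distrib[symmetric] field_simps)
  have "rho2 (n+2) = 6 - 4 * (?p (x+1) / ?p x) - 4 * (?p (x-1) / ?p x) + ?p (x+2) / ?p x + ?p (x-2) / ?p x"
    using quot[of 1] quot[of "-1"] quot[of 2] quot[of "-2"]
    unfolding rho2_def x_def[symmetric] by (simp add: x_def)
  hence "rho2 (n+2) * ?p x = 6 * ?p x - 4 * ?p (x+1) - 4 * ?p (x-1) + ?p (x+2) + ?p (x-2)"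
    using px by (simp add: field_simps)
  moreover have "x + 1 = real (n+3)" "x - 1 = real (n+1)" "x + 2 = real (n+4)" "x - 2 = real n"
    unfolding x_def by simp_all
  ultimately show ?thesis
    by (simp add: neg_lap_def pow32_eq x_def eval_nat_numeral algebra_simps)
qed

lemma pow32_nonneg: "pow32 n \<ge> 0"
  by (simp add: pow32_def)

lemma pow32_squared: "(pow32 n)\<^sup>2 = real n ^ 3"
  by (simp add: pow32_def power_mult_distrib power3_eq_cube power2_eq_square)

lemma pow32_mult_Suc_le:
  fixes n :: nat
  defines "x \<equiv> real n + 1"
  shows "pow32 n * pow32 (n+1) \<le> (x\<^sup>2 - x) * (x - 1/2)"
proof -
  have x: "x\<^sup>2 - x = real n * (real n + 1)"
    by (simp add: x_def power2_eq_square algebra_simps)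
  have "pow32 n * pow32 (n+1) = (x\<^sup>2 - x) * sqrt (x\<^sup>2 - x)"
    unfolding x by (simp add: pow32_def real_sqrt_mult ac_simps)
  moreover have "sqrt (x\<^sup>2 - x) \<le> x - 1/2"
    by (rule real_le_lsqrt) (auto simp: x_def power2_eq_square algebra_simps)
  moreover have "x\<^sup>2 - x \<ge> 0" unfolding x by simp
  ultimately show ?thesis by (simp add: mult_left_mono)
qed

lemma pow32_mult_add2_bounds:
  fixes n :: nat
  defines "x \<equiv> real n + 1"
  assumes "n \<ge> 1"
  shows "(x\<^sup>2 - 1) * (x - 1/x) \<le> pow32 n * pow32 (n+2)" and "pow32 n * pow32 (n+2) \<le> x ^ 3"
proof -
  have x2: "x \<ge> 2" using assms(2) unfolding x_def by simp
  have x: "x\<^sup>2 - 1 = real n * (real n + 2)"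
    by (simp add: x_def power2_eq_square algebra_simps)
  have eq: "pow32 n * pow32 (n+2) = (x\<^sup>2 - 1) * sqrt (x\<^sup>2 - 1)"
    unfolding x by (simp add: pow32_def real_sqrt_mult ac_simps)
  have nonneg: "x\<^sup>2 - 1 \<ge> 0" unfolding x by simp
  have "x - 1/x \<le> sqrt (x\<^sup>2 - 1)"
  proof (rule real_le_rsqrt)
    have "(x - 1/x)\<^sup>2 = x\<^sup>2 - 2 + 1/x\<^sup>2" using x2 by (simp add: power2_eq_square field_simps)
    moreover have "1/x\<^sup>2 \<le> 1" using nonneg by (simp add: divide_le_eq_1)
    ultimately show "(x - 1/x)\<^sup>2 \<le> x\<^sup>2 - 1" by linarith
  qed
  then show "(x\<^sup>2 - 1) * (x - 1/x) \<le> pow32 n * pow32 (n+2)"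
    unfolding eq using nonneg by (simp add: mult_left_mono)
  have "sqrt (x\<^sup>2 - 1) \<le> x" using x2 by (intro real_le_lsqrt) auto
  then have "(x\<^sup>2 - 1) * sqrt (x\<^sup>2 - 1) \<le> (x\<^sup>2 - 1) * x" using nonneg by (simp add: mult_left_mono)
  also have "\<dots> \<le> x ^ 3" using x2 by (simp add: power3_eq_cube power2_eq_square algebra_simps)
  finally show "pow32 n * pow32 (n+2) \<le> x ^ 3" unfolding eq .
qed

definition kinetic :: "(nat \<Rightarrow> real) \<Rightarrow> (nat \<Rightarrow> real) \<Rightarrow> nat \<Rightarrow> real" where
  "kinetic w \<psi> n = 4 * w n * w (n+1) * (\<psi> (n+1) - \<psi> n)\<^sup>2 - w n * w (n+2) * (\<psi> (n+2) - \<psi> n)\<^sup>2"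

lemma sum_neg_lap_squared_ground_state:
  fixes w \<psi> :: "nat \<Rightarrow> real"
  assumes "\<psi> 0 = 0" "\<psi> 1 = 0" "\<psi> K = 0" "\<psi> (K+1) = 0"
  shows "(\<Sum>n<K. (neg_lap (\<lambda>m. w m * \<psi> m) (n+1))\<^sup>2)
    = (\<Sum>n<K. (\<psi> (n+2))\<^sup>2 * w (n+2) * neg_lap (neg_lap w) (n+2)) + (\<Sum>n<K. kinetic w \<psi> n)"
proof -
  \<comment> \<open>boundary term of the summation by parts\<close>
  define G where "G n = - (\<psi> n * w n)\<^sup>2 - 4 * \<psi> n * \<psi> (n+1) * w n * w (n+1) - 5 * (\<psi> (n+1) * w (n+1))\<^sup>2
      + 4 * ((\<psi> n)\<^sup>2 + (\<psi> (n+1))\<^sup>2) * w n * w (n+1)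
      + 4 * (\<psi> (n+1))\<^sup>2 * w (n+1) * w (n+2) - (\<psi> n)\<^sup>2 * w n * w (n+2) - (\<psi> (n+1))\<^sup>2 * w (n+1) * w (n+3)" for n
  have step: "(neg_lap (\<lambda>m. w m * \<psi> m) (n+1))\<^sup>2
      = (\<psi> (n+2))\<^sup>2 * w (n+2) * neg_lap (neg_lap w) (n+2) + kinetic w \<psi> n + (G (Suc n) - G n)" for n
    by (simp add: neg_lap_def kinetic_def G_def eval_nat_numeral algebra_simps power2_eq_square)
  have "G 0 = 0" "G K = 0" using assms by (simp_all add: G_def)
  moreover have "(\<Sum>n<K. (neg_lap (\<lambda>m. w m * \<psi> m) (n+1))\<^sup>2)
      = (\<Sum>n<K. (\<psi> (n+2))\<^sup>2 * w (n+2) * neg_lap (neg_lap w) (n+2)) + (\<Sum>n<K. kinetic w \<psi> n) + (G K - G 0)"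
    by (simp only: step sum.distrib sum_lessThan_telescope)
  ultimately show ?thesis by simp
qed

lemma rellich_weight_le_kinetic:
  fixes \<rho> \<psi> :: "nat \<Rightarrow> real"
  assumes "rellich_weight \<rho>" "\<psi> 0 = 0" "\<psi> 1 = 0" "\<And>m. m \<ge> K \<Longrightarrow> \<psi> m = 0"
  shows "(\<Sum>n<K. (\<rho> (n+2) - rho2 (n+2)) * (pow32 (n+2) * \<psi> (n+2))\<^sup>2) \<le> (\<Sum>n<K. kinetic pow32 \<psi> n)"
proof -
  define u where "u m = pow32 m * \<psi> m" for m
  have u0: "u m = 0" if "m \<ge> K" for m using assms(4)[OF that] by (simp add: u_def)
  have "summable (\<lambda>n. (u n)\<^sup>2)" by (rule summable_finite[of "{..<K}"]) (auto simp: u0)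
  hence "u \<in> H02" unfolding H02_def using assms(2,3) by (simp add: u_def)
  hence "(\<Sum>n. \<rho> (n+2) * (u (n+2))\<^sup>2) \<le> (\<Sum>n. (neg_lap u (n+1))\<^sup>2)"
    using assms(1) unfolding rellich_weight_def by blast
  moreover have "(\<Sum>n. \<rho> (n+2) * (u (n+2))\<^sup>2) = (\<Sum>n<K. \<rho> (n+2) * (u (n+2))\<^sup>2)"
    by (rule suminf_finite) (auto simp: u0)
  moreover have "(\<Sum>n. (neg_lap u (n+1))\<^sup>2) = (\<Sum>n<K. (neg_lap u (n+1))\<^sup>2)"
    by (rule suminf_finite) (auto simp: u0 neg_lap_def)
  moreover have "(\<Sum>n<K. (neg_lap u (n+1))\<^sup>2)
      = (\<Sum>n<K. rho2 (n+2) * (u (n+2))\<^sup>2) + (\<Sum>n<K. kinetic pow32 \<psi> n)"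
  proof -
    have "rho2 (n+2) * (u (n+2))\<^sup>2 = (\<psi> (n+2))\<^sup>2 * pow32 (n+2) * neg_lap (neg_lap pow32) (n+2)" for n
      unfolding u_def rho2_mult_pow32[symmetric] by (simp add: power2_eq_square)
    then show ?thesis
      unfolding u_def using sum_neg_lap_squared_ground_state[of \<psi> K pow32] assms(2-4) by simp
  qed
  ultimately show ?thesis
    by (simp add: u_def sum_subtractf left_diff_distrib)
qed

definition cutoff_slope :: "nat \<Rightarrow> nat \<Rightarrow> nat \<Rightarrow> real" where
  "cutoff_slope N K m = (if N \<le> m \<and> m < K then real K / (real m + 1) - 1 else 0)"

definition cutoff_mass :: "nat \<Rightarrow> nat \<Rightarrow> real" where
  "cutoff_mass N K = (\<Sum>m<K. cutoff_slope N K m)"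

definition cutoff :: "nat \<Rightarrow> nat \<Rightarrow> nat \<Rightarrow> real" where
  "cutoff N K m = (if m < 2 then 0 else (\<Sum>j\<in>{m..<K}. cutoff_slope N K j) / cutoff_mass N K)"

lemma cutoff_slope_nonneg: "cutoff_slope N K m \<ge> 0"
  by (simp add: cutoff_slope_def)

lemma cutoff_slope_pos: "N \<le> m \<Longrightarrow> m + 1 < K \<Longrightarrow> cutoff_slope N K m > 0"
  by (simp add: cutoff_slope_def)

lemma cutoff_mass_nonneg: "cutoff_mass N K \<ge> 0"
  by (simp add: cutoff_mass_def sum_nonneg cutoff_slope_nonneg)

lemma cutoff_mass_pos:
  assumes "N + 1 < K"
  shows "cutoff_mass N K > 0"
proof -
  have "cutoff_slope N K N \<le> cutoff_mass N K"
    unfolding cutoff_mass_def using assms by (intro member_le_sum) (auto simp: cutoff_slope_nonneg)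
  with cutoff_slope_pos[of N N K] assms show ?thesis by simp
qed

lemma cutoff_0_1 [simp]: "cutoff N K 0 = 0" "cutoff N K (Suc 0) = 0"
  by (simp_all add: cutoff_def)

lemma cutoff_eq_zero: "K \<le> m \<Longrightarrow> cutoff N K m = 0"
  by (simp add: cutoff_def)

lemma cutoff_eq_one:
  assumes "2 \<le> m" "m \<le> N" "N + 1 < K"
  shows "cutoff N K m = 1"
proof -
  have "(\<Sum>j\<in>{m..<K}. cutoff_slope N K j) = cutoff_mass N K"
    unfolding cutoff_mass_def using assms
    by (intro sum.mono_neutral_left) (auto simp: cutoff_slope_def)
  with cutoff_mass_pos[OF assms(3)] assms(1) show ?thesis by (simp add: cutoff_def)
qed

lemma cutoff_Suc_diff:
  assumes "2 \<le> m"
  shows "cutoff N K (Suc m) - cutoff N K m = - cutoff_slope N K m / cutoff_mass N K"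
proof (cases "m < K")
  case True
  then have "(\<Sum>j\<in>{m..<K}. cutoff_slope N K j) = cutoff_slope N K m + (\<Sum>j\<in>{Suc m..<K}. cutoff_slope N K j)"
    by (rule sum.atLeast_Suc_lessThan)
  with assms show ?thesis by (simp add: cutoff_def add_divide_distrib)
qed (simp add: cutoff_eq_zero cutoff_slope_def)

lemma harm_diff_eq_sum:
  "N \<le> K \<Longrightarrow> harm K - harm N = (\<Sum>m\<in>{N..<K}. 1 / (real m + 1))"
  by (induction K rule: dec_induct) (auto simp: harm_Suc field_simps)

lemma cutoff_mass_ge:
  assumes "N \<le> K"
  shows "real K * (harm K - harm N) - real K \<le> cutoff_mass N K"
proof -
  have "cutoff_mass N K = (\<Sum>m\<in>{N..<K}. real K / (real m + 1) - 1)"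
    unfolding cutoff_mass_def cutoff_slope_def
    by (rule sum.mono_neutral_cong_right) auto
  also have "\<dots> = real K * (harm K - harm N) - real (K - N)"
    by (simp add: harm_diff_eq_sum[OF assms] sum_subtractf sum_distrib_left)
  finally show ?thesis by simp
qed

lemma cutoff_mass_ratio_tendsto_zero:
  "((\<lambda>K. real K / cutoff_mass N K) \<longlongrightarrow> 0) sequentially"
proof -
  have "filterlim (\<lambda>K. - (harm N + 1) + harm K :: real) at_top sequentially"
    by (rule filterlim_tendsto_add_at_top[OF tendsto_const harm_at_top])
  then have "filterlim (\<lambda>K. harm K - (harm N + 1) :: real) at_top sequentially"
    by (simp add: algebra_simps)
  then have lim: "((\<lambda>K. inverse (harm K - (harm N + 1))) \<longlongrightarrow> (0::real)) sequentially"
    by (rule tendsto_inverse_0_at_top)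
  have "eventually (\<lambda>K. harm N + 2 \<le> (harm K :: real)) sequentially"
    using harm_at_top unfolding filterlim_at_top by blast
  then have "eventually (\<lambda>K. real K / cutoff_mass N K \<le> inverse (harm K - (harm N + 1))) sequentially"
  proof eventually_elim
    case (elim K)
    have "N \<le> K"
      using elim harm_mono[of K N, where 'a=real] by (cases "N \<le> K") auto
    then have "real K * (harm K - (harm N + 1)) \<le> cutoff_mass N K"
      using cutoff_mass_ge[of N K] by (simp add: algebra_simps)
    moreover have "harm K - (harm N + 1) > (0::real)" using elim by simp
    ultimately show ?case
      using cutoff_mass_nonneg[of N K] by (simp add: divide_simps mult.commute)
  qed
  then show ?thesis
    by (intro tendsto_sandwich[OF _ _ tendsto_const lim]) (simp_all add: cutoff_mass_nonneg)
qed

lemma kinetic_cutoff_le: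
  fixes w :: "nat \<Rightarrow> real" and N K n :: nat
  assumes w_nonneg: "\<And>m. w m \<ge> 0" and "2 \<le> n"
  defines "b \<equiv> cutoff_slope N K" and "S \<equiv> cutoff_mass N K"
  shows "kinetic w (cutoff N K) n \<le> 4 * (w n * w (n+1) * (b n)\<^sup>2 - w n * w (n+2) * b n * b (n+1)) / S\<^sup>2"
proof -
  let ?P = "w n * w (n+1)" and ?R = "w n * w (n+2)"
  have d1: "cutoff N K (n+1) - cutoff N K n = - b n / S"
    using cutoff_Suc_diff[OF assms(2)] by (simp add: b_def S_def)
  have d2: "cutoff N K (n+2) - cutoff N K n = - (b n + b (n+1)) / S"
    using cutoff_Suc_diff[OF assms(2)] cutoff_Suc_diff[of "Suc n"] assms(2)
    by (simp add: b_def S_def eval_nat_numeral diff_divide_distrib algebra_simps)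
  have "kinetic w (cutoff N K) n = (4 * ?P * (b n)\<^sup>2 - ?R * (b n + b (n+1))\<^sup>2) / S\<^sup>2"
    unfolding kinetic_def d1 d2 power_divide power2_minus by (simp add: diff_divide_distrib)
  also have "\<dots> \<le> 4 * (?P * (b n)\<^sup>2 - ?R * b n * b (n+1)) / S\<^sup>2"
  proof (rule divide_right_mono)
    have "?R * (4 * (b n * b (n+1))) \<le> ?R * (b n + b (n+1))\<^sup>2"
      using w_nonneg sum_squares_ge_zero[of "b n - b (n+1)" 0]
      by (intro mult_left_mono) (simp_all add: power2_eq_square algebra_simps)
    then show "4 * ?P * (b n)\<^sup>2 - ?R * (b n + b (n+1))\<^sup>2 \<le> 4 * (?P * (b n)\<^sup>2 - ?R * b n * b (n+1))"
      by (simp add: algebra_simps)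
  qed simp
  finally show ?thesis .
qed

text \<open>In the application x = n + 1, b and b' are consecutive slopes of the cutoff, and P, R
  stand for pow32 n * pow32 (n+1) and pow32 n * pow32 (n+2).\<close>
lemma slope_form_le:
  fixes x k b b' P R :: real
  assumes x3: "x \<ge> 3" and kx: "k \<ge> x" and b_eq: "b = k/x - 1"
    and b'_nonneg: "0 \<le> b'" and b'_le: "b' \<le> b" and b_diff: "b - b' \<le> k/(x*(x+1))"
    and P_le: "P \<le> (x\<^sup>2 - x) * (x - 1/2)"
    and R_ge: "(x\<^sup>2 - 1) * (x - 1/x) \<le> R" and R_le: "R \<le> x ^ 3"
  shows "P * b\<^sup>2 - R * b * b' \<le> k*(k-x) - 3/2*(k-x)\<^sup>2 + 11/4*k*b"
proof -
  have b_nonneg: "b \<ge> 0" using b'_nonneg b'_le by linarith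
  have b_eq': "b = (k-x)/x" using b_eq x3 by (simp add: field_simps)
  have "P - R \<le> -3/2*x\<^sup>2 + 5/2*x"
  proof -
    have "(x\<^sup>2 - x) * (x - 1/2) - (x\<^sup>2 - 1) * (x - 1/x) = -3/2*x\<^sup>2 + 5/2*x - 1/x"
      using x3 by (simp add: field_simps power2_eq_square)
    moreover have "1/x \<ge> 0" using x3 by simp
    ultimately show ?thesis using P_le R_ge by linarith
  qed
  then have PR: "(P - R) * b\<^sup>2 \<le> (-3/2*x\<^sup>2 + 5/2*x) * b\<^sup>2"
    by (simp add: mult_right_mono)
  have R_nonneg: "R \<ge> 0"
  proof -
    have xx: "1 \<le> x * x" using x3 mult_mono[of 1 x 1 x] by simp
    then have "x\<^sup>2 - 1 \<ge> 0" by (simp add: power2_eq_square)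
    moreover have "x - 1/x \<ge> 0" using xx x3 by (simp add: field_simps)
    ultimately show ?thesis using R_ge by (smt (verit) mult_nonneg_nonneg)
  qed
  have "R * b * (b - b') \<le> x ^ 3 * b * (k/(x*(x+1)))"
    using b_diff b'_le R_nonneg b_nonneg R_le kx x3
    by (intro mult_mono) (simp_all add: mult_right_mono)
  also have "\<dots> = x/(x+1) * (k*(k-x))"
    unfolding b_eq' using x3 by (simp add: power3_eq_cube)
  also have "\<dots> \<le> k*(k-x)"
    using x3 kx by (intro mult_left_le_one_le) simp_all
  finally have Rb: "R * b * (b - b') \<le> k*(k-x)" .
  have "(-3/2*x\<^sup>2 + 5/2*x) * b\<^sup>2 = - 3/2*(k-x)\<^sup>2 + 5/2*((k-x)*b)"
    using x3 unfolding b_eq' by (simp add: field_simps power2_eq_square)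
  also have "\<dots> \<le> - 3/2*(k-x)\<^sup>2 + 11/4*k*b"
  proof -
    have "(k-x)*b \<le> k*b" "0 \<le> k*b" using x3 b_nonneg kx by (simp_all add: mult_right_mono)
    then show ?thesis by linarith
  qed
  finally have "(-3/2*x\<^sup>2 + 5/2*x) * b\<^sup>2 \<le> - 3/2*(k-x)\<^sup>2 + 11/4*k*b" .
  moreover have "P * b\<^sup>2 - R * b * b' = (P - R) * b\<^sup>2 + R * b * (b - b')"
    by (simp add: algebra_simps power2_eq_square)
  ultimately show ?thesis using PR Rb by linarith
qed

lemma pow32_cutoff_slope_form_le:
  fixes N K n :: nat
  assumes "2 \<le> n" "N \<le> n" "n < K"
  defines "b \<equiv> cutoff_slope N K" and "k \<equiv> real K" and "x \<equiv> real n + 1"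
  shows "pow32 n * pow32 (n+1) * (b n)\<^sup>2 - pow32 n * pow32 (n+2) * b n * b (n+1)
    \<le> k*(k-x) - 3/2*(k-x)\<^sup>2 + 11/4*k*b n"
proof (rule slope_form_le)
  show "x \<ge> 3" "k \<ge> x" "b n = k/x - 1" using assms by (simp_all add: cutoff_slope_def)
  show "0 \<le> b (n+1)" by (simp add: b_def cutoff_slope_nonneg)
  have "b (n+1) \<le> b n \<and> b n - b (n+1) \<le> k/(x*(x+1))"
  proof (cases "n + 1 < K")
    case True
    have "b n - b (n+1) = k/x - k/(x+1)"
      using assms True by (simp add: cutoff_slope_def)
    also have "\<dots> = k/(x*(x+1))"
      by (simp add: x_def field_simps)
    finally have "b n - b (n+1) = k/(x*(x+1))" .
    moreover have "k/(x*(x+1)) \<ge> 0" by (simp add: k_def x_def)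
    ultimately show ?thesis by simp
  next
    case False
    then have "K = n + 1" using assms(3) by simp
    then show ?thesis by (simp add: b_def k_def x_def cutoff_slope_def field_simps)
  qed
  then show "b (n+1) \<le> b n" "b n - b (n+1) \<le> k/(x*(x+1))" by simp_all
  show "pow32 n * pow32 (n+1) \<le> (x\<^sup>2 - x) * (x - 1/2)"
    unfolding x_def by (rule pow32_mult_Suc_le)
  show "(x\<^sup>2 - 1) * (x - 1/x) \<le> pow32 n * pow32 (n+2)" "pow32 n * pow32 (n+2) \<le> x ^ 3"
    unfolding x_def using pow32_mult_add2_bounds assms(1) by simp_all
qed

lemma sum_quadratic_tail_le:
  fixes N K :: nat
  assumes "N \<le> K"
  defines "k \<equiv> real K"
  shows "(\<Sum>n\<in>{N..<K}. k*(k - (real n + 1)) - 3/2*(k - (real n + 1))\<^sup>2) \<le> k\<^sup>2 * (real N + 1) / 2"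
proof -
  define \<phi> where "\<phi> n = (k - real n - 1) * (k - real n) * (real n + 1/2) / 2" for n
  have step: "k*(k - (real n + 1)) - 3/2*(k - (real n + 1))\<^sup>2 = - (\<phi> (Suc n) - \<phi> n)" for n
    by (simp add: \<phi>_def field_simps power2_eq_square)
  have "(\<Sum>n\<in>{N..<K}. k*(k - (real n + 1)) - 3/2*(k - (real n + 1))\<^sup>2) = - (\<phi> K - \<phi> N)"
    unfolding step sum_negf sum_Suc_diff'[OF assms(1)] ..
  also have "\<dots> = \<phi> N - \<phi> K" by simp
  also have "\<phi> K = 0" by (simp add: \<phi>_def k_def)
  also have "\<phi> N \<le> k\<^sup>2 * (real N + 1) / 2"
  proof -
    have "(k - real N - 1) * (k - real N) \<le> k * k"
      using assms by (intro mult_mono) (auto simp: k_def)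
    then have "(k - real N - 1) * (k - real N) * (real N + 1/2) \<le> (k * k) * (real N + 1)"
      using assms by (intro mult_mono) (auto simp: k_def)
    then show ?thesis by (simp add: \<phi>_def power2_eq_square)
  qed
  finally show ?thesis by simp
qed

lemma kinetic_pow32_cutoff_one:
  assumes "3 \<le> N" "N + 1 < K"
  shows "kinetic pow32 (cutoff N K) 1 = 8 * sqrt 2 - 3 * sqrt 3"
proof -
  have idx: "(1::nat) + 1 = 2" "(1::nat) + 2 = 3" by simp_all
  have "kinetic pow32 (cutoff N K) 1
      = 4 * pow32 1 * pow32 2 * (cutoff N K 2 - cutoff N K 1)\<^sup>2 - pow32 1 * pow32 3 * (cutoff N K 3 - cutoff N K 1)\<^sup>2"
    unfolding kinetic_def idx ..
  also have "\<dots> = 8 * sqrt 2 - 3 * sqrt 3"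
    using assms cutoff_eq_one[of 2 N K] cutoff_eq_one[of 3 N K] by (simp add: pow32_def)
  finally show ?thesis .
qed

lemma sum_kinetic_pow32_cutoff_le:
  fixes N K :: nat
  assumes "3 \<le> N" "N + 2 \<le> K"
  defines "q \<equiv> real K / cutoff_mass N K"
  shows "(\<Sum>n<K. kinetic pow32 (cutoff N K) n) \<le> 8 * sqrt 2 - 3 * sqrt 3 + 2 * (real N + 1) * q\<^sup>2 + 11 * q"
proof -
  define S where "S = cutoff_mass N K"
  define b where "b = cutoff_slope N K"
  define k where "k = real K"
  define Q where "Q n = pow32 n * pow32 (n+1) * (b n)\<^sup>2 - pow32 n * pow32 (n+2) * b n * b (n+1)" for n
  have S_pos: "S > 0" using cutoff_mass_pos assms by (simp add: S_def)
  have "(\<Sum>n\<in>{2..<K}. kinetic pow32 (cutoff N K) n) \<le> (\<Sum>n\<in>{2..<K}. 4 * Q n / S\<^sup>2)"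
    unfolding Q_def b_def S_def by (intro sum_mono kinetic_cutoff_le) (simp_all add: pow32_nonneg)
  also have "\<dots> = 4 / S\<^sup>2 * (\<Sum>n\<in>{2..<K}. Q n)"
    by (simp add: sum_distrib_left)
  also have "(\<Sum>n\<in>{2..<K}. Q n) = (\<Sum>n\<in>{N..<K}. Q n)"
    using assms by (intro sum.mono_neutral_right) (auto simp: Q_def b_def cutoff_slope_def)
  also have "(\<Sum>n\<in>{N..<K}. Q n) \<le> (\<Sum>n\<in>{N..<K}. k*(k - (real n + 1)) - 3/2*(k - (real n + 1))\<^sup>2 + 11/4*k*b n)"
    unfolding Q_def b_def k_def using assms by (intro sum_mono pow32_cutoff_slope_form_le) auto
  also have "\<dots> \<le> k\<^sup>2 * (real N + 1) / 2 + 11/4 * k * S"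
  proof -
    have "(\<Sum>n\<in>{N..<K}. b n) = S"
      unfolding S_def cutoff_mass_def b_def by (rule sum.mono_neutral_left) (auto simp: cutoff_slope_def)
    then have "(\<Sum>n\<in>{N..<K}. 11/4*k*b n) = 11/4*k*S"
      by (simp only: sum_distrib_left[symmetric])
    then show ?thesis
      using sum_quadratic_tail_le[of N K] assms unfolding sum.distrib k_def by linarith
  qed
  finally have "(\<Sum>n\<in>{2..<K}. kinetic pow32 (cutoff N K) n) \<le> 2 * (real N + 1) * q\<^sup>2 + 11 * q"
    using S_pos by (simp add: q_def S_def k_def field_simps power2_eq_square mult_left_mono)
  moreover have "(\<Sum>n<K. kinetic pow32 (cutoff N K) n)
      = kinetic pow32 (cutoff N K) 0 + kinetic pow32 (cutoff N K) 1 + (\<Sum>n\<in>{2..<K}. kinetic pow32 (cutoff N K) n)"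
    using assms by (simp add: atLeast0LessThan[symmetric] sum.atLeast_Suc_lessThan numeral_2_eq_2)
  moreover have "kinetic pow32 (cutoff N K) 0 = 0" by (simp add: kinetic_def pow32_def)
  ultimately show ?thesis
    using kinetic_pow32_cutoff_one assms by simp
qed

lemma rellich_partial_sum_le:
  fixes \<rho> :: "nat \<Rightarrow> real" and N K :: nat
  assumes "rellich_weight \<rho>" "\<And>n. n \<ge> 2 \<Longrightarrow> \<rho> n \<ge> rho2 n" "3 \<le> N" "N + 2 \<le> K"
  defines "q \<equiv> real K / cutoff_mass N K"
  shows "(\<Sum>n<N-1. (real (n + 2))^3 * (\<rho> (n + 2) - rho2 (n + 2)))
    \<le> 8 * sqrt 2 - 3 * sqrt 3 + 2 * (real N + 1) * q\<^sup>2 + 11 * q"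
proof -
  let ?e = "\<lambda>n. (\<rho> (n+2) - rho2 (n+2)) * (pow32 (n+2) * cutoff N K (n+2))\<^sup>2"
  have "(\<Sum>n<N-1. (real (n + 2))^3 * (\<rho> (n + 2) - rho2 (n + 2))) = (\<Sum>n<N-1. ?e n)"
    using assms(3,4) by (intro sum.cong) (simp_all add: cutoff_eq_one pow32_squared)
  also have "\<dots> \<le> (\<Sum>n<K. ?e n)"
    using assms(2-4) by (intro sum_mono2) auto
  also have "\<dots> \<le> (\<Sum>n<K. kinetic pow32 (cutoff N K) n)"
    using assms(1) by (rule rellich_weight_le_kinetic) (simp_all add: cutoff_eq_zero)
  also have "\<dots> \<le> 8 * sqrt 2 - 3 * sqrt 3 + 2 * (real N + 1) * q\<^sup>2 + 11 * q"
    unfolding q_def using assms(3,4) by (rule sum_kinetic_pow32_cutoff_le)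
  finally show ?thesis .
qed

theorem theorem3p2:
  fixes \<rho> :: "nat \<Rightarrow> real"
  assumes "rellich_weight \<rho>"
    and "\<And>n. n \<ge> 2 \<Longrightarrow> \<rho> n \<ge> rho2 n"
  shows "summable (\<lambda>n. (real (n + 2))^3 * (\<rho> (n + 2) - rho2 (n + 2)))
    \<and> (\<Sum>n. (real (n + 2))^3 * (\<rho> (n + 2) - rho2 (n + 2))) \<le> 8 * sqrt 2 - 3 * sqrt 3"
proof -
  define f where "f n = (real (n + 2))^3 * (\<rho> (n + 2) - rho2 (n + 2))" for n
  define C where "C = 8 * sqrt 2 - 3 * sqrt 3"
  have f_nonneg: "f n \<ge> 0" for n
    unfolding f_def using assms(2)[of "n+2"] by simp
  have partial: "(\<Sum>n<N-1. f n) \<le> C" if "3 \<le> N" for N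
  proof (rule tendsto_lowerbound)
    let ?q = "\<lambda>K. real K / cutoff_mass N K"
    have "((\<lambda>K. C + 2 * (real N + 1) * (?q K)\<^sup>2 + 11 * ?q K) \<longlongrightarrow> C + 2 * (real N + 1) * 0\<^sup>2 + 11 * 0) sequentially"
      by (intro tendsto_intros cutoff_mass_ratio_tendsto_zero)
    then show "((\<lambda>K. C + 2 * (real N + 1) * (?q K)\<^sup>2 + 11 * ?q K) \<longlongrightarrow> C) sequentially"
      by simp
    show "eventually (\<lambda>K. (\<Sum>n<N-1. f n) \<le> C + 2 * (real N + 1) * (?q K)\<^sup>2 + 11 * ?q K) sequentially"
      using eventually_ge_at_top[of "N + 2"]
      by eventually_elim (use rellich_partial_sum_le[OF assms that] in \<open>simp add: f_def C_def\<close>)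
  qed simp
  have bounded: "(\<Sum>n<J. f n) \<le> C" for J
    using f_nonneg[of J] f_nonneg[of "J+1"] partial[of "J+3"] by simp
  have "summable f"
    using f_nonneg bounded by (rule summableI_nonneg_bounded)
  moreover have "suminf f \<le> C"
    using \<open>summable f\<close> bounded by (rule suminf_le_const)
  ultimately show ?thesis unfolding f_def C_def by simp
qed

end
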